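(* Let $q$ be a prime power and $L\in\mathbb{F}_q[x]$ a $q$-polynomial of $q$-degree $n$ such that $L(x)/x$ is irreducible in $\mathbb{F}_q[x]$. Let $E$ be a splitting field of $L$ over $\mathbb{F}_q$ and $V\subseteq E$ the $\mathbb{F}_q$-space of roots of $L$. For any ordered $\mathbb{F}_q$-basis $v_1,\dots,v_n$ of $V$ and $r\geq 1$, let $\epsilon_r:H_{n,r}(\mathbb{F}_q)\to E$, $\epsilon_r(P)=P(v_1,\dots,v_n)$. Then $\epsilon_r$ is injective for $1\leq r\leq q-1$.
   Context: $H_{n,r}(\mathbb{F}_q)$ is the space of homogeneous polynomials of degree $r$ in $\mathbb{F}_q[x_1,\dots,x_n]$ together with $0$. A $q$-polynomial of $q$-degree $n$ is $\sum_{i=0}^n a_ix^{q^i}$ with $a_n\neq0$. *)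

theory Defs
  imports "HOL-Computational_Algebra.Polynomial" "HOL-Computational_Algebra.Factorial_Ring" "HOL-Library.Poly_Mapping"
begin

definition field_emb :: "('a::field \<Rightarrow> 'e::field) \<Rightarrow> bool" where
  "field_emb f \<longleftrightarrow> inj f \<and> f 0 = 0 \<and> f 1 = 1 \<and>
     (\<forall>x y. f (x + y) = f x + f y) \<and> (\<forall>x y. f (x * y) = f x * f y)"

definition q_polynomial :: "nat \<Rightarrow> nat \<Rightarrow> 'a::comm_ring_1 poly \<Rightarrow> bool" where
  "q_polynomial q n L \<longleftrightarrow> (\<exists>a. a n \<noteq> 0 \<and> L = (\<Sum>i\<le>n. monom (a i) (q ^ i)))"

definition is_subfield :: "'e::field set \<Rightarrow> bool" where
  "is_subfield S \<longleftrightarrow> 0 \<in> S \<and> 1 \<in> S \<and> (\<forall>x\<in>S. \<forall>y\<in>S. x + y \<in> S \<and> x * y \<in> S) \<and>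
     (\<forall>x\<in>S. - x \<in> S \<and> inverse x \<in> S)"

definition splitting_field :: "('a::field \<Rightarrow> 'e::field) \<Rightarrow> 'a poly \<Rightarrow> bool" where
  "splitting_field f L \<longleftrightarrow>
     (\<exists>c rs. map_poly f L = smult c (\<Prod>r\<leftarrow>rs. [:- r, 1:])) \<and>
     (\<forall>S. is_subfield S \<longrightarrow> range f \<subseteq> S \<longrightarrow>
          {x. poly (map_poly f L) x = 0} \<subseteq> S \<longrightarrow> S = UNIV)"

text \<open>Multivariate polynomials in variables x_0,...,x_(n-1) are coefficient maps
  finitely supported maps from monomials (exponent vectors) to coefficients.
  H(n,r): homogeneous of degree r (0 included).\<close>
definition homogeneous :: "nat \<Rightarrow> nat \<Rightarrow> ((nat \<Rightarrow>\<^sub>0 nat) \<Rightarrow>\<^sub>0 'a::zero) \<Rightarrow> bool" where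
  "homogeneous n r P \<longleftrightarrow>
     (\<forall>m \<in> Poly_Mapping.keys P. Poly_Mapping.keys m \<subseteq> {..<n} \<and> (\<Sum>i\<in>Poly_Mapping.keys m. Poly_Mapping.lookup m i) = r)"

definition eval_mpoly :: "('a::zero \<Rightarrow> 'e::comm_ring_1) \<Rightarrow> (nat \<Rightarrow> 'e) \<Rightarrow> ((nat \<Rightarrow>\<^sub>0 nat) \<Rightarrow>\<^sub>0 'a) \<Rightarrow> 'e" where
  "eval_mpoly f v P = (\<Sum>m\<in>Poly_Mapping.keys P. f (Poly_Mapping.lookup P m) * (\<Prod>i\<in>Poly_Mapping.keys m. v i ^ Poly_Mapping.lookup m i))"

definition ordered_basis :: "('a::field \<Rightarrow> 'e::field) \<Rightarrow> 'e set \<Rightarrow> nat \<Rightarrow> (nat \<Rightarrow> 'e) \<Rightarrow> bool" where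
  "ordered_basis f V n v \<longleftrightarrow>
     (\<forall>c. (\<Sum>i<n. f (c i) * v i) = 0 \<longrightarrow> (\<forall>i<n. c i = 0)) \<and>
     V = {(\<Sum>i<n. f (c i) * v i) | c. True}"

end

theory Submission
  imports Defs "HOL-Library.Cardinality"
begin

(* Put \<alpha> = v 0. The q-th power map of E is additive and fixes the image of F_q,
   so the root space V of L is stable under it and contains \<alpha>, \<alpha>^q, ..., \<alpha>^(q^(n-1)).
   As \<alpha> is a root of the irreducible polynomial L(x)/x of degree q^n - 1, no nonzero polynomial
   of smaller degree vanishes at \<alpha>. A monomial x^m of degree r < q takes the value \<alpha>^N at
   this point, where N has base-q digits m; distinct monomials give distinct exponents
   1 <= N < q^n, so evaluation of degree-r forms at (\<alpha>, \<alpha>^q, ...) is injective. Every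
   \<alpha>^(q^j) lies in the span of v, so each value of a form at that point is also the value
   of a form at v, and counting over the finite set of forms gives injectivity at v. *)

subsection \<open>Field embeddings\<close>

context
  fixes f :: "'a::field \<Rightarrow> 'e::field"
  assumes emb: "field_emb f"
begin

lemma emb_0: "f 0 = 0" and emb_1: "f 1 = 1"
  and emb_add: "f (x + y) = f x + f y" and emb_mult: "f (x * y) = f x * f y"
  using emb by (simp_all add: field_emb_def)

lemma emb_eq_iff: "f x = f y \<longleftrightarrow> x = y"
  using emb by (auto simp: field_emb_def dest: injD)

lemma emb_eq_0_iff: "f x = 0 \<longleftrightarrow> x = 0"
  using emb_eq_iff[of x 0] by (simp add: emb_0)

lemma emb_diff: "f (x - y) = f x - f y"
  by (metis add_diff_cancel_right' diff_add_cancel emb_add)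

lemma emb_sum: "f (sum g A) = (\<Sum>i\<in>A. f (g i))"
  using sum_comp_morphism[of f g A] by (simp add: emb_0 emb_add comp_def)

lemma emb_power: "f (x ^ k) = f x ^ k"
  by (induction k) (simp_all add: emb_1 emb_mult)

lemma emb_of_nat: "f (of_nat k) = of_nat k"
  by (induction k) (simp_all add: emb_0 emb_1 emb_add)

lemma map_poly_emb_add: "map_poly f (p + p') = map_poly f p + map_poly f p'"
  by (intro poly_eqI) (simp add: coeff_map_poly emb_0 emb_add)

lemma map_poly_emb_mult: "map_poly f (p * p') = map_poly f p * map_poly f p'"
  by (intro poly_eqI) (simp add: coeff_map_poly coeff_mult emb_0 emb_sum emb_mult)

lemma poly_map_poly_emb_sum_monom:
  "poly (map_poly f (\<Sum>i\<in>A. monom (b i) (e i))) y = (\<Sum>i\<in>A. f (b i) * y ^ e i)"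
proof -
  have "map_poly f (\<Sum>i\<in>A. monom (b i) (e i)) = (\<Sum>i\<in>A. monom (f (b i)) (e i))"
    by (induction A rule: infinite_finite_induct) (simp_all add: map_poly_emb_add map_poly_monom emb_0)
  then show ?thesis by (simp add: poly_sum poly_monom)
qed

text \<open>A nonzero polynomial of least degree among those with root \<open>\<alpha>\<close> (a minimal polynomial)
  divides every polynomial with root \<open>\<alpha>\<close>; it also divides \<open>G\<close> and is no unit, so it is an
  associate of \<open>G\<close>.\<close>
lemma irreducible_dvd_if_common_root:
  assumes irr: "irreducible G" and G_root: "poly (map_poly f G) \<alpha> = 0"
    and h_root: "poly (map_poly f h) \<alpha> = 0"
  shows "G dvd h"
proof -
  define S where "S = {p. p \<noteq> 0 \<and> poly (map_poly f p) \<alpha> = 0}"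
  have "G \<in> S" using irr G_root by (auto simp: S_def)
  then obtain \<mu> where \<mu>: "\<mu> \<in> S" and \<mu>_least: "\<And>p. p \<in> S \<Longrightarrow> degree \<mu> \<le> degree p"
    using ex_has_least_nat[of "\<lambda>p. p \<in> S" G degree] by blast
  have \<mu>_dvd: "\<mu> dvd p" if "poly (map_poly f p) \<alpha> = 0" for p
  proof (rule ccontr)
    assume "\<not> \<mu> dvd p"
    then have "p mod \<mu> \<noteq> 0" by (simp add: mod_eq_0_iff_dvd)
    moreover have "map_poly f p = map_poly f (p div \<mu>) * map_poly f \<mu> + map_poly f (p mod \<mu>)"
      by (metis div_mult_mod_eq map_poly_emb_add map_poly_emb_mult)
    then have "poly (map_poly f (p mod \<mu>)) \<alpha> = 0" using that \<mu> by (simp add: S_def)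
    ultimately have "degree \<mu> \<le> degree (p mod \<mu>)" by (intro \<mu>_least) (simp add: S_def)
    moreover have "degree (p mod \<mu>) < degree \<mu>"
      using \<mu> \<open>p mod \<mu> \<noteq> 0\<close> by (intro degree_mod_less') (auto simp: S_def)
    ultimately show False by simp
  qed
  have "degree \<mu> \<noteq> 0"
  proof
    assume "degree \<mu> = 0"
    then obtain c where "\<mu> = [:c:]" by (rule degree_eq_zeroE)
    with \<mu> show False by (simp add: S_def map_poly_pCons emb_0 emb_eq_0_iff)
  qed
  then have "\<not> is_unit \<mu>" using \<mu> by (simp add: S_def is_unit_iff_degree)
  with irr \<mu>_dvd[OF G_root] have "G dvd \<mu>" by (auto simp: irreducible_altdef)
  from this \<mu>_dvd[OF h_root] show ?thesis by (rule dvd_trans)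
qed

lemma eq_0_if_common_root_degree_less:
  assumes "irreducible G" "poly (map_poly f G) \<alpha> = 0" "poly (map_poly f h) \<alpha> = 0"
    and "degree h < degree G"
  shows "h = 0"
  using irreducible_dvd_if_common_root[OF assms(1-3)] assms(4) dvd_imp_degree_le by fastforce

end

subsection \<open>The Frobenius map and \<open>q\<close>-polynomials\<close>

lemma power_card_eq_self:
  fixes x :: "'a::{finite,field}"
  shows "x ^ CARD('a) = x"
proof (cases "x = 0")
  case True
  then show ?thesis by (simp add: finite_UNIV_card_ge_0)
next
  case False
  define U where "U = UNIV - {0::'a}"
  have "(\<Prod>y\<in>U. x * y) = (\<Prod>y\<in>U. y)"
    by (rule prod.reindex_bij_witness[of _ "\<lambda>y. y / x" "\<lambda>y. x * y"]) (use False in \<open>auto simp: U_def\<close>)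
  moreover have "(\<Prod>y\<in>U. y) \<noteq> 0" by (simp add: U_def)
  ultimately have "x ^ card U = 1" by (simp add: prod.distrib)
  moreover have "CARD('a) = Suc (card U)"
    using finite_UNIV_card_ge_0[where ?'a = 'a] by (simp add: U_def card_Diff_singleton)
  ultimately show ?thesis by simp
qed

text \<open>Every element is a root of \<open>(x + 1) ^ q - x ^ q - 1\<close>, a polynomial of degree less than
  \<open>q\<close> whose coefficients are the inner binomial coefficients; so these vanish.\<close>
lemma of_nat_card_choose_eq_0:
  assumes "0 < i" "i < CARD('a::{finite,field})"
  shows "(of_nat (CARD('a) choose i) :: 'a) = 0"
proof -
  define q where "q = CARD('a)"
  have q_pos: "0 < q" by (simp add: q_def finite_UNIV_card_ge_0)
  define D :: "'a poly" where "D = (\<Sum>k\<in>{1..<q}. monom (of_nat (q choose k)) k)"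
  have root: "poly D b = 0" for b :: 'a
  proof -
    have ends: "{..q} = insert 0 (insert q {1..<q})" using q_pos by auto
    have "b + 1 = (b + 1) ^ q" by (simp add: q_def power_card_eq_self)
    also have "\<dots> = (\<Sum>k\<le>q. of_nat (q choose k) * b ^ k * 1 ^ (q - k))"
      by (rule binomial_ring)
    also have "\<dots> = 1 + b ^ q + poly D b"
      using q_pos by (simp add: ends D_def poly_sum poly_monom add.assoc)
    also have "b ^ q = b" by (simp add: q_def power_card_eq_self)
    finally show ?thesis by (simp add: algebra_simps)
  qed
  have "D = 0"
  proof (rule ccontr)
    assume "D \<noteq> 0"
    then have "card {x. poly D x = 0} \<le> degree D" by (rule card_poly_roots_bound)
    moreover have "degree D \<le> q - 1"
      by (rule degree_le) (auto simp: D_def coeff_sum coeff_monom)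
    moreover have "{x. poly D x = 0} = UNIV" using root by simp
    ultimately show False using q_pos unfolding q_def by simp
  qed
  moreover have "coeff D i = of_nat (q choose i)"
    using assms by (simp add: D_def q_def coeff_sum coeff_monom)
  ultimately show ?thesis by (simp add: q_def)
qed

text \<open>The embedding only serves to carry the vanishing binomial coefficients over to \<open>'e\<close>.\<close>
lemma power_card_add:
  fixes f :: "'a::{finite,field} \<Rightarrow> 'e::field" and y z :: 'e
  assumes emb: "field_emb f"
  shows "(y + z) ^ CARD('a) = y ^ CARD('a) + z ^ CARD('a)"
proof -
  define q where "q = CARD('a)"
  have q_pos: "0 < q" by (simp add: q_def finite_UNIV_card_ge_0)
  have inner: "(of_nat (q choose k) :: 'e) = 0" if "k \<in> {1..<q}" for k
    using that emb_of_nat[OF emb, of "q choose k"] of_nat_card_choose_eq_0[where 'a = 'a, of k]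
    by (simp add: q_def emb_0[OF emb])
  have ends: "{..q} = insert 0 (insert q {1..<q})" using q_pos by auto
  have "(y + z) ^ q = (\<Sum>k\<le>q. of_nat (q choose k) * y ^ k * z ^ (q - k))"
    by (rule binomial_ring)
  also have "\<dots> = y ^ q + z ^ q"
    using q_pos inner by (simp add: ends)
  finally show ?thesis by (simp add: q_def)
qed

lemma power_card_sum:
  fixes f :: "'a::{finite,field} \<Rightarrow> 'e::field" and g :: "'b \<Rightarrow> 'e"
  assumes "field_emb f"
  shows "(sum g A) ^ CARD('a) = (\<Sum>i\<in>A. g i ^ CARD('a))"
proof (induction A rule: infinite_finite_induct)
  case (insert i A)
  then show ?case by (simp add: power_card_add[OF assms])
qed (simp_all add: finite_UNIV_card_ge_0)

lemma q_polynomial_div_X: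
  assumes L: "q_polynomial q n L" and q: "2 \<le> q"
  shows "L = [:0, 1:] * (L div [:0, 1:])" and "degree (L div [:0, 1:]) = q ^ n - 1"
proof -
  obtain a where a_n: "a n \<noteq> 0" and L_eq: "L = (\<Sum>i\<le>n. monom (a i) (q ^ i))"
    using L by (auto simp: q_polynomial_def)
  have coeff_L: "coeff L k = (\<Sum>i\<le>n. if q ^ i = k then a i else 0)" for k
    by (simp add: L_eq coeff_sum coeff_monom)
  have "coeff L 0 = 0" using q by (simp add: coeff_L)
  then have "[:0, 1:] dvd L" by (simp add: dvd_iff_poly_eq_0 poly_0_coeff_0)
  then show L_split: "L = [:0, 1:] * (L div [:0, 1:])" by (rule dvd_mult_div_cancel[symmetric])
  have "coeff L (q ^ n) = a n" using q by (simp add: coeff_L)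
  then have "q ^ n \<le> degree L" using a_n by (simp add: le_degree)
  moreover have "degree L \<le> q ^ n"
  proof (rule degree_le, intro allI impI)
    fix k assume k: "q ^ n < k"
    have "q ^ i \<noteq> k" if "i \<le> n" for i using k power_increasing[of i n q] that q by linarith
    then show "coeff L k = 0" by (simp add: coeff_L)
  qed
  ultimately have "degree L = q ^ n" by simp
  moreover have "L div [:0, 1:] \<noteq> 0" using L_split a_n \<open>coeff L (q ^ n) = a n\<close> by auto
  ultimately show "degree (L div [:0, 1:]) = q ^ n - 1"
    using arg_cong[OF L_split, of degree] by (simp add: degree_mult_eq)
qed

lemma q_polynomial_root_power_card_power:
  fixes f :: "'a::{finite,field} \<Rightarrow> 'e::field"
  assumes emb: "field_emb f" and L: "q_polynomial CARD('a) n L"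
    and root: "poly (map_poly f L) y = 0"
  shows "poly (map_poly f L) (y ^ CARD('a) ^ j) = 0"
proof (induction j)
  case 0
  then show ?case using root by simp
next
  case (Suc j)
  define q where "q = CARD('a)"
  obtain a where L_eq: "L = (\<Sum>i\<le>n. monom (a i) (q ^ i))"
    using L by (auto simp: q_polynomial_def q_def)
  have fixed: "f c ^ q = f c" for c
    by (simp add: q_def power_card_eq_self flip: emb_power[OF emb])
  have "f (a i) * (y ^ q ^ Suc j) ^ q ^ i = (f (a i) * (y ^ q ^ j) ^ q ^ i) ^ q" for i
  proof -
    have "(y ^ q ^ Suc j) ^ q ^ i = ((y ^ q ^ j) ^ q ^ i) ^ q" by (simp add: mult_ac flip: power_mult)
    then show ?thesis by (simp add: power_mult_distrib fixed)
  qed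
  then have "poly (map_poly f L) (y ^ q ^ Suc j) = (\<Sum>i\<le>n. (f (a i) * (y ^ q ^ j) ^ q ^ i) ^ q)"
    unfolding L_eq poly_map_poly_emb_sum_monom[OF emb] by simp
  also have "\<dots> = poly (map_poly f L) (y ^ q ^ j) ^ q"
    unfolding L_eq poly_map_poly_emb_sum_monom[OF emb] q_def by (rule power_card_sum[OF emb, symmetric])
  also have "\<dots> = 0" using Suc by (simp add: q_def finite_UNIV_card_ge_0)
  finally show ?case by (simp add: q_def)
qed

subsection \<open>Forms and their values\<close>

definition degree_exponents :: "nat \<Rightarrow> nat \<Rightarrow> (nat \<Rightarrow>\<^sub>0 nat) set" where
  "degree_exponents n r =
     {m. Poly_Mapping.keys m \<subseteq> {..<n} \<and> (\<Sum>j<n. Poly_Mapping.lookup m j) = r}"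

lemma lookup_eq_0_of_degree_exponents:
  assumes "m \<in> degree_exponents n r" "n \<le> j"
  shows "Poly_Mapping.lookup m j = 0"
  using assms by (auto simp: degree_exponents_def in_keys_iff)

lemma lookup_le_of_degree_exponents:
  assumes m: "m \<in> degree_exponents n r"
  shows "Poly_Mapping.lookup m j \<le> r"
proof (cases "j < n")
  case True
  then have "Poly_Mapping.lookup m j \<le> (\<Sum>j<n. Poly_Mapping.lookup m j)"
    by (intro member_le_sum) auto
  then show ?thesis using m by (simp add: degree_exponents_def)
qed (simp add: lookup_eq_0_of_degree_exponents[OF m])

lemma finite_degree_exponents: "finite (degree_exponents n r)"
proof -
  have "Poly_Mapping.lookup m \<in>
      {g. \<forall>j. (j \<in> {..<n} \<longrightarrow> g j \<in> {..r}) \<and> (j \<notin> {..<n} \<longrightarrow> g j = 0)}"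
    if m: "m \<in> degree_exponents n r" for m
    using lookup_le_of_degree_exponents[OF m] lookup_eq_0_of_degree_exponents[OF m] by simp
  then have "Poly_Mapping.lookup ` degree_exponents n r \<subseteq>
      {g. \<forall>j. (j \<in> {..<n} \<longrightarrow> g j \<in> {..r}) \<and> (j \<notin> {..<n} \<longrightarrow> g j = 0)}"
    by (rule image_subsetI)
  then have "finite (Poly_Mapping.lookup ` degree_exponents n r)"
    by (rule finite_subset) (intro finite_set_of_finite_funs; simp)
  then show ?thesis by (rule finite_imageD) (simp add: inj_on_def)
qed

lemma add_single_mem_degree_exponents:
  assumes "m \<in> degree_exponents n r" "i < n"
  shows "m + Poly_Mapping.single i 1 \<in> degree_exponents n (Suc r)"
proof -
  have "Poly_Mapping.keys (m + Poly_Mapping.single i 1) \<subseteq> {..<n}"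
    using keys_add[of m "Poly_Mapping.single i 1"] assms by (auto simp: degree_exponents_def)
  moreover have "(\<Sum>j<n. Poly_Mapping.lookup (m + Poly_Mapping.single i 1) j) = Suc r"
    using assms by (simp add: lookup_add lookup_single when_def sum.distrib degree_exponents_def)
  ultimately show ?thesis by (simp add: degree_exponents_def)
qed

lemma degree_exponents_SucE:
  assumes m: "m \<in> degree_exponents n (Suc r)"
  obtains i m' where "i < n" "m' \<in> degree_exponents n r" "m = m' + Poly_Mapping.single i 1"
proof -
  have keys: "Poly_Mapping.keys m \<subseteq> {..<n}" and sum: "(\<Sum>j<n. Poly_Mapping.lookup m j) = Suc r"
    using m by (auto simp: degree_exponents_def)
  have "\<exists>i<n. Poly_Mapping.lookup m i \<noteq> 0"
  proof (rule ccontr)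
    assume "\<not> (\<exists>i<n. Poly_Mapping.lookup m i \<noteq> 0)"
    then have "(\<Sum>j<n. Poly_Mapping.lookup m j) = 0" by simp
    with sum show False by simp
  qed
  then obtain i where i: "i < n" "Poly_Mapping.lookup m i \<noteq> 0" by blast
  define m' where "m' = m - Poly_Mapping.single i 1"
  have m_eq: "m = m' + Poly_Mapping.single i 1"
    using i by (intro poly_mapping_eqI) (auto simp: m'_def lookup_add lookup_minus lookup_single when_def)
  have "Poly_Mapping.keys m' \<subseteq> Poly_Mapping.keys m"
    by (auto simp: m'_def in_keys_iff lookup_minus)
  then have "Poly_Mapping.keys m' \<subseteq> {..<n}" using keys by blast
  moreover have "(\<Sum>j<n. Poly_Mapping.lookup m' j) = r"
    using sum i by (subst (asm) m_eq) (simp add: lookup_add lookup_single when_def sum.distrib)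
  ultimately have "m' \<in> degree_exponents n r" by (simp add: degree_exponents_def)
  then show thesis by (rule that[OF i(1) _ m_eq])
qed

definition monomial_value :: "nat \<Rightarrow> (nat \<Rightarrow> 'e::comm_semiring_1) \<Rightarrow> (nat \<Rightarrow>\<^sub>0 nat) \<Rightarrow> 'e" where
  "monomial_value n u m = (\<Prod>j<n. u j ^ Poly_Mapping.lookup m j)"

lemma monomial_value_add_single:
  assumes "i < n"
  shows "monomial_value n u (m + Poly_Mapping.single i 1) = monomial_value n u m * u i"
proof -
  have "monomial_value n u (m + Poly_Mapping.single i 1)
      = (\<Prod>j<n. u j ^ Poly_Mapping.lookup m j * (if i = j then u j else 1))"
    unfolding monomial_value_def
    by (intro prod.cong) (auto simp: lookup_add lookup_single when_def power_add)
  also have "\<dots> = monomial_value n u m * u i"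
    using assms by (simp add: monomial_value_def prod.distrib)
  finally show ?thesis .
qed

definition forms :: "nat \<Rightarrow> nat \<Rightarrow> ((nat \<Rightarrow>\<^sub>0 nat) \<Rightarrow> 'a::zero) set" where
  "forms n r = {c. \<forall>m. m \<notin> degree_exponents n r \<longrightarrow> c m = 0}"

definition form_value ::
    "('a \<Rightarrow> 'e::comm_semiring_1) \<Rightarrow> nat \<Rightarrow> nat \<Rightarrow> (nat \<Rightarrow> 'e) \<Rightarrow> ((nat \<Rightarrow>\<^sub>0 nat) \<Rightarrow> 'a) \<Rightarrow> 'e"
  where "form_value f n r u c = (\<Sum>m\<in>degree_exponents n r. f (c m) * monomial_value n u m)"

definition scalar_span :: "('a \<Rightarrow> 'e::comm_semiring_1) \<Rightarrow> nat \<Rightarrow> (nat \<Rightarrow> 'e) \<Rightarrow> 'e set" where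
  "scalar_span f n u = {\<Sum>i<n. f (c i) * u i | c. True}"

lemma finite_forms: "finite (forms n r :: ((nat \<Rightarrow>\<^sub>0 nat) \<Rightarrow> 'a::{finite,zero}) set)"
  using finite_set_of_finite_funs[OF finite_degree_exponents finite_class.finite_UNIV]
  by (simp add: forms_def conj_commute)

lemma range_form_value: "range (form_value f n r u) = form_value f n r u ` forms n r"
proof -
  have "form_value f n r u c = form_value f n r u (\<lambda>m. if m \<in> degree_exponents n r then c m else 0)"
    for c by (simp add: form_value_def)
  moreover have "(\<lambda>m. if m \<in> degree_exponents n r then c m else 0) \<in> forms n r" for c
    by (simp add: forms_def)
  ultimately show ?thesis by blast
qed

lemma homogeneous_keys_subset:
  assumes "homogeneous n r P"
  shows "Poly_Mapping.keys P \<subseteq> degree_exponents n r"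
proof
  fix m assume m: "m \<in> Poly_Mapping.keys P"
  then have keys: "Poly_Mapping.keys m \<subseteq> {..<n}"
    and "(\<Sum>i\<in>Poly_Mapping.keys m. Poly_Mapping.lookup m i) = r"
    using assms by (auto simp: homogeneous_def)
  moreover have "(\<Sum>i\<in>Poly_Mapping.keys m. Poly_Mapping.lookup m i) = (\<Sum>i<n. Poly_Mapping.lookup m i)"
    using keys by (intro sum.mono_neutral_left) (auto simp: in_keys_iff)
  ultimately show "m \<in> degree_exponents n r" by (simp add: degree_exponents_def)
qed

lemma eval_mpoly_homogeneous:
  assumes "f 0 = 0" and hom: "homogeneous n r P"
  shows "eval_mpoly f v P = form_value f n r v (Poly_Mapping.lookup P)"
proof -
  have "eval_mpoly f v P = (\<Sum>m\<in>Poly_Mapping.keys P. f (Poly_Mapping.lookup P m) * monomial_value n v m)"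
    unfolding eval_mpoly_def
  proof (intro sum.cong refl arg_cong2[where f = "(*)"])
    fix m assume "m \<in> Poly_Mapping.keys P"
    then have "Poly_Mapping.keys m \<subseteq> {..<n}"
      using homogeneous_keys_subset[OF hom] by (auto simp: degree_exponents_def)
    then show "(\<Prod>i\<in>Poly_Mapping.keys m. v i ^ Poly_Mapping.lookup m i) = monomial_value n v m"
      unfolding monomial_value_def by (intro prod.mono_neutral_left) (auto simp: in_keys_iff)
  qed
  also have "\<dots> = form_value f n r v (Poly_Mapping.lookup P)"
    unfolding form_value_def using assms(1) homogeneous_keys_subset[OF hom]
    by (intro sum.mono_neutral_left finite_degree_exponents) (auto simp: in_keys_iff)
  finally show ?thesis .
qed

lemma inj_on_eval_mpoly_homogeneous:
  assumes "f 0 = 0" and inj: "inj_on (form_value f n r v) (forms n r)"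
  shows "inj_on (eval_mpoly f v) {P. homogeneous n r P}"
proof (rule inj_onI)
  fix P Q assume P: "P \<in> {P. homogeneous n r P}" and Q: "Q \<in> {P. homogeneous n r P}"
    and "eval_mpoly f v P = eval_mpoly f v Q"
  then have "form_value f n r v (Poly_Mapping.lookup P) = form_value f n r v (Poly_Mapping.lookup Q)"
    using eval_mpoly_homogeneous[of f, OF assms(1)] by simp
  moreover have "Poly_Mapping.lookup P' \<in> forms n r" if "homogeneous n r P'" for P'
    using homogeneous_keys_subset[OF that] by (auto simp: forms_def in_keys_iff)
  ultimately have "Poly_Mapping.lookup P = Poly_Mapping.lookup Q"
    using P Q by (intro inj_onD[OF inj]) simp_all
  then show "P = Q" by simp
qed

context
  fixes f :: "'a::field \<Rightarrow> 'e::field"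
  assumes emb: "field_emb f"
begin

lemma form_value_diff:
  "form_value f n r u (\<lambda>m. c m - d m) = form_value f n r u c - form_value f n r u d"
  by (simp add: form_value_def emb_diff[OF emb] left_diff_distrib sum_subtractf)

lemma form_values_add:
  assumes "x \<in> range (form_value f n r u)" "y \<in> range (form_value f n r u)"
  shows "x + y \<in> range (form_value f n r u)"
proof -
  obtain c d where "x = form_value f n r u c" "y = form_value f n r u d" using assms by blast
  then have "x + y = form_value f n r u (\<lambda>m. c m + d m)"
    by (simp add: form_value_def emb_add[OF emb] distrib_right sum.distrib)
  then show ?thesis by blast
qed

lemma form_values_scale:
  assumes "x \<in> range (form_value f n r u)"
  shows "f a * x \<in> range (form_value f n r u)"
proof -
  obtain c where "x = form_value f n r u c" using assms by blast
  then have "f a * x = form_value f n r u (\<lambda>m. a * c m)"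
    by (simp add: form_value_def emb_mult[OF emb] sum_distrib_left mult.assoc)
  then show ?thesis by blast
qed

lemma zero_in_form_values: "0 \<in> range (form_value f n r u)"
proof -
  have "form_value f n r u (\<lambda>_. 0) = 0" by (simp add: form_value_def emb_0[OF emb])
  then show ?thesis by (metis rangeI)
qed

lemma form_values_sum:
  assumes "\<And>i. i \<in> A \<Longrightarrow> g i \<in> range (form_value f n r u)"
  shows "sum g A \<in> range (form_value f n r u)"
  using assms
  by (induction A rule: infinite_finite_induct) (simp_all add: zero_in_form_values form_values_add)

lemma monomial_value_in_form_values:
  assumes "m \<in> degree_exponents n r"
  shows "monomial_value n u m \<in> range (form_value f n r u)"
proof -
  have "form_value f n r u (\<lambda>m'. if m' = m then 1 else 0)
      = (\<Sum>m'\<in>degree_exponents n r. if m' = m then monomial_value n u m' else 0)"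
    unfolding form_value_def by (intro sum.cong) (auto simp: emb_0[OF emb] emb_1[OF emb])
  also have "\<dots> = monomial_value n u m" using assms by (simp add: finite_degree_exponents)
  finally show ?thesis by (metis rangeI)
qed

lemma form_values_mult_span:
  assumes "x \<in> range (form_value f n r u)" and "y \<in> scalar_span f n u"
  shows "x * y \<in> range (form_value f n (Suc r) u)"
proof -
  obtain c where x: "x = form_value f n r u c" using assms(1) by blast
  obtain d where y: "y = (\<Sum>i<n. f (d i) * u i)" using assms(2) by (auto simp: scalar_span_def)
  have "x * y = (\<Sum>m\<in>degree_exponents n r. \<Sum>i<n. (f (c m) * monomial_value n u m) * (f (d i) * u i))"
    unfolding x y form_value_def by (rule sum_product)
  also have "\<dots> = (\<Sum>m\<in>degree_exponents n r. \<Sum>i<n.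
      f (c m * d i) * monomial_value n u (m + Poly_Mapping.single i 1))"
    by (intro sum.cong refl) (subst monomial_value_add_single, simp_all add: emb_mult[OF emb] mult_ac)
  also have "\<dots> \<in> range (form_value f n (Suc r) u)"
    by (intro form_values_sum form_values_scale monomial_value_in_form_values
        add_single_mem_degree_exponents) auto
  finally show ?thesis .
qed

lemma monomial_value_of_span_in_form_values:
  assumes span: "\<And>j. j < n \<Longrightarrow> w j \<in> scalar_span f n u"
    and "m \<in> degree_exponents n r"
  shows "monomial_value n w m \<in> range (form_value f n r u)"
  using assms(2)
proof (induction r arbitrary: m)
  case 0
  then have "monomial_value n w m = monomial_value n u m" by (simp add: monomial_value_def degree_exponents_def)
  then show ?case using monomial_value_in_form_values[OF 0] by simp
next
  case (Suc r)
  obtain i m' where i: "i < n" and m': "m' \<in> degree_exponents n r"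
    and m_eq: "m = m' + Poly_Mapping.single i 1"
    using Suc.prems by (rule degree_exponents_SucE)
  have "monomial_value n w m = monomial_value n w m' * w i"
    unfolding m_eq by (rule monomial_value_add_single[OF i])
  also have "\<dots> \<in> range (form_value f n (Suc r) u)"
    by (rule form_values_mult_span[OF Suc.IH[OF m'] span[OF i]])
  finally show ?case .
qed

lemma form_values_subset_of_span:
  assumes "\<And>j. j < n \<Longrightarrow> w j \<in> scalar_span f n u"
  shows "range (form_value f n r w) \<subseteq> range (form_value f n r u)"
  unfolding form_value_def[of f n r w]
  by (auto intro!: form_values_sum form_values_scale monomial_value_of_span_in_form_values assms)

end

subsection \<open>Evaluation along a Frobenius orbit\<close>

lemma base_expansion_less:
  fixes q :: nat
  assumes "\<forall>j<n. x j < q"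
  shows "(\<Sum>j<n. q ^ j * x j) < q ^ n"
  using assms
proof (induction n)
  case 0
  then show ?case by simp
next
  case (Suc n)
  then have "(\<Sum>j<Suc n. q ^ j * x j) < q ^ n + q ^ n * x n" by simp
  also have "\<dots> = q ^ n * (x n + 1)" by (simp add: algebra_simps)
  also have "\<dots> \<le> q ^ n * q" using Suc.prems by (intro mult_left_mono) auto
  finally show ?case by (simp add: mult.commute)
qed

lemma base_expansion_inj:
  fixes q :: nat
  assumes "\<forall>j<n. x j < q" "\<forall>j<n. y j < q"
    and "(\<Sum>j<n. q ^ j * x j) = (\<Sum>j<n. q ^ j * y j)"
  shows "\<forall>j<n. x j = y j"
  using assms
proof (induction n)
  case 0
  then show ?case by simp
next
  case (Suc n)
  define A where "A = (\<Sum>j<n. q ^ j * x j)"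
  define B where "B = (\<Sum>j<n. q ^ j * y j)"
  have "A < q ^ n" "B < q ^ n" using Suc.prems by (auto simp: A_def B_def intro!: base_expansion_less)
  moreover have "x n < q" using Suc.prems(1) by simp
  then have "0 < q ^ n" by (intro zero_less_power) linarith
  ultimately have "(A + x n * q ^ n) div q ^ n = x n" "(B + y n * q ^ n) div q ^ n = y n" by simp_all
  moreover have eq: "A + x n * q ^ n = B + y n * q ^ n"
    using Suc.prems(3) by (simp add: A_def B_def mult.commute)
  ultimately have "x n = y n" by simp
  moreover have "\<forall>j<n. x j = y j"
    using Suc.IH Suc.prems(1,2) eq \<open>x n = y n\<close> by (simp add: A_def B_def)
  ultimately show ?case by (auto simp: less_Suc_eq)
qed

definition exponent_weight :: "nat \<Rightarrow> nat \<Rightarrow> (nat \<Rightarrow>\<^sub>0 nat) \<Rightarrow> nat" where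
  "exponent_weight q n m = (\<Sum>j<n. q ^ j * Poly_Mapping.lookup m j)"

lemma lookup_less_of_degree_exponents:
  assumes "m \<in> degree_exponents n r" "r < q"
  shows "\<forall>j<n. Poly_Mapping.lookup m j < q"
  using lookup_le_of_degree_exponents[OF assms(1)] assms(2) le_less_trans by blast

lemma inj_on_exponent_weight:
  assumes "r < q"
  shows "inj_on (exponent_weight q n) (degree_exponents n r)"
proof (rule inj_onI, rule poly_mapping_eqI)
  fix m m' j
  assume m: "m \<in> degree_exponents n r" and m': "m' \<in> degree_exponents n r"
    and eq: "exponent_weight q n m = exponent_weight q n m'"
  show "Poly_Mapping.lookup m j = Poly_Mapping.lookup m' j"
  proof (cases "j < n")
    case True
    then show ?thesis
      using base_expansion_inj[of n "Poly_Mapping.lookup m" q "Poly_Mapping.lookup m'"] eq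
        lookup_less_of_degree_exponents[OF m assms] lookup_less_of_degree_exponents[OF m' assms]
      by (simp add: exponent_weight_def)
  next
    case False
    then show ?thesis using m m' by (simp add: lookup_eq_0_of_degree_exponents)
  qed
qed

lemma exponent_weight_bounds:
  assumes m: "m \<in> degree_exponents n r" and "1 \<le> r" "r < q"
  shows "1 \<le> exponent_weight q n m" "exponent_weight q n m < q ^ n"
proof -
  have "r = (\<Sum>j<n. Poly_Mapping.lookup m j)" using m by (simp add: degree_exponents_def)
  also have "\<dots> \<le> exponent_weight q n m"
    unfolding exponent_weight_def using \<open>r < q\<close> by (intro sum_mono) simp
  finally show "1 \<le> exponent_weight q n m" using \<open>1 \<le> r\<close> by simp
  show "exponent_weight q n m < q ^ n"
    unfolding exponent_weight_def
    by (rule base_expansion_less[OF lookup_less_of_degree_exponents[OF m \<open>r < q\<close>]])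
qed

lemma monomial_value_power_orbit:
  "monomial_value n (\<lambda>j. \<alpha> ^ q ^ j) m = \<alpha> ^ exponent_weight q n m"
  by (simp add: monomial_value_def exponent_weight_def power_sum power_mult)

context
  fixes f :: "'a::field \<Rightarrow> 'e::field"
  assumes emb: "field_emb f"
begin

text \<open>As \<open>r < q\<close>, distinct monomials take distinct values \<open>\<alpha> ^ N\<close> with \<open>1 \<le> N < q ^ n\<close> on the
  orbit; dividing by \<open>\<alpha>\<close>, a vanishing form yields a root \<open>\<alpha>\<close> of a polynomial of degree
  less than \<open>q ^ n - 1\<close>.\<close>
lemma form_value_orbit_eq_0_imp_coeff_eq_0:
  assumes small_roots: "\<And>h. poly (map_poly f h) \<alpha> = 0 \<Longrightarrow> degree h < q ^ n - 1 \<Longrightarrow> h = 0"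
    and "\<alpha> \<noteq> 0" and r: "1 \<le> r" "r < q"
    and zero: "form_value f n r (\<lambda>j. \<alpha> ^ q ^ j) c = 0"
    and m: "m \<in> degree_exponents n r"
  shows "c m = 0"
proof -
  define E where "E = degree_exponents n r"
  define N where "N = exponent_weight q n"
  have m_E: "m \<in> E" using m by (simp add: E_def)
  have N_bounds: "1 \<le> N m'" "N m' < q ^ n" if "m' \<in> E" for m'
    using exponent_weight_bounds[OF _ r] that by (simp_all add: E_def N_def)
  define h where "h = (\<Sum>m'\<in>E. monom (c m') (N m' - 1))"
  have "\<alpha> * (f (c m') * \<alpha> ^ (N m' - 1)) = f (c m') * monomial_value n (\<lambda>j. \<alpha> ^ q ^ j) m'"
    if "m' \<in> E" for m'
    using N_bounds(1)[OF that]
    by (simp add: monomial_value_power_orbit N_def mult.left_commute flip: power_Suc)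
  then have "\<alpha> * poly (map_poly f h) \<alpha> = form_value f n r (\<lambda>j. \<alpha> ^ q ^ j) c"
    unfolding h_def poly_map_poly_emb_sum_monom[OF emb] form_value_def sum_distrib_left E_def[symmetric]
    by (intro sum.cong) simp_all
  then have h_root: "poly (map_poly f h) \<alpha> = 0" using zero \<open>\<alpha> \<noteq> 0\<close> by simp
  have coeff_h: "coeff h k = (\<Sum>m'\<in>E. if N m' - 1 = k then c m' else 0)" for k
    by (simp add: h_def coeff_sum coeff_monom)
  have "degree h \<le> q ^ n - 2"
    by (rule degree_le) (auto simp: coeff_h intro!: sum.neutral dest: N_bounds)
  moreover have "2 \<le> q ^ n" using N_bounds[OF m_E] by simp
  ultimately have "h = 0" using h_root small_roots by simp
  moreover have "coeff h (N m - 1) = c m"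
  proof -
    have "N m' - 1 = N m - 1 \<longleftrightarrow> m' = m" if "m' \<in> E" for m'
    proof -
      have "N m' - 1 = N m - 1 \<longleftrightarrow> N m' = N m" using N_bounds(1)[OF that] N_bounds(1)[OF m_E] by linarith
      also have "\<dots> \<longleftrightarrow> m' = m"
        using inj_on_exponent_weight[OF \<open>r < q\<close>, of n] that m_E by (auto simp: E_def N_def dest: inj_onD)
      finally show ?thesis .
    qed
    then have "coeff h (N m - 1) = (\<Sum>m'\<in>E. if m' = m then c m' else 0)"
      unfolding coeff_h by (intro sum.cong) auto
    also have "\<dots> = c m" using m_E by (simp add: E_def finite_degree_exponents)
    finally show ?thesis .
  qed
  ultimately show ?thesis by simp
qed

lemma ordered_basis_vector:
  assumes "ordered_basis f V n v" "i < n"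
  shows "v i \<in> V" "v i \<noteq> 0"
proof -
  define c :: "nat \<Rightarrow> 'a" where "c j = (if j = i then 1 else 0)" for j
  have "(\<Sum>j<n. f (c j) * v j) = (\<Sum>j<n. if j = i then v j else 0)"
    by (intro sum.cong) (simp_all add: c_def emb_0[OF emb] emb_1[OF emb])
  also have "\<dots> = v i" using assms(2) by simp
  finally have sum_c: "(\<Sum>j<n. f (c j) * v j) = v i" .
  then show "v i \<in> V" using assms(1) unfolding ordered_basis_def by (metis (mono_tags, lifting) mem_Collect_eq)
  show "v i \<noteq> 0"
  proof
    assume "v i = 0"
    then have "c i = 0" using assms sum_c by (simp add: ordered_basis_def)
    then show False by (simp add: c_def)
  qed
qed

end

lemma inj_on_if_image_subset:
  assumes "finite A" "inj_on g A" "g ` A \<subseteq> h ` A"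
  shows "inj_on h A"
proof -
  have "card A \<le> card (h ` A)"
    using card_image[OF assms(2)] card_mono[OF finite_imageI[OF assms(1)] assms(3)] by simp
  then show ?thesis using assms(1) card_image_le[OF assms(1), of h] by (intro eq_card_imp_inj_on) simp_all
qed

text \<open>Values of forms at points of the span of \<open>v\<close> are values of forms at \<open>v\<close>; by counting,
  injectivity at such a point \<open>w\<close> therefore transfers to injectivity at \<open>v\<close>.\<close>
lemma inj_on_form_value_if_span:
  fixes f :: "'a::{finite,field} \<Rightarrow> 'e::field"
  assumes emb: "field_emb f"
    and span: "\<And>j. j < n \<Longrightarrow> w j \<in> scalar_span f n v"
    and kernel: "\<And>c m. form_value f n r w c = 0 \<Longrightarrow> m \<in> degree_exponents n r \<Longrightarrow> c m = 0"
  shows "inj_on (form_value f n r v) (forms n r)"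
proof (rule inj_on_if_image_subset[OF finite_forms])
  show "inj_on (form_value f n r w) (forms n r)"
  proof (rule inj_onI)
    fix c d assume c: "c \<in> forms n r" and d: "d \<in> forms n r"
      and eq: "form_value f n r w c = form_value f n r w d"
    then have "form_value f n r w (\<lambda>m. c m - d m) = 0" by (simp add: form_value_diff[OF emb])
    then show "c = d" using c d kernel by (fastforce simp: forms_def)
  qed
  show "form_value f n r w ` forms n r \<subseteq> form_value f n r v ` forms n r"
    using form_values_subset_of_span[OF emb span] by (simp add: range_form_value)
qed

theorem theorem7p3:
  fixes f :: "'a::{finite,field} \<Rightarrow> 'e::field"
    and L :: "'a poly" and q n r :: nat and v :: "nat \<Rightarrow> 'e"
  assumes "card (UNIV :: 'a set) = q"
    and "field_emb f"
    and "q_polynomial q n L"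
    and "irreducible (L div [:0, 1:])"
    and "splitting_field f L"
    and "ordered_basis f {x. poly (map_poly f L) x = 0} n v"
    and "1 \<le> r" and "r \<le> q - 1"
  shows "inj_on (eval_mpoly f v) {P. homogeneous n r P}"
proof -
  note emb = assms(2)
  have q: "2 \<le> q" using card_mono[of UNIV "{0, 1 :: 'a}"] assms(1) by simp
  define G where "G = L div [:0, 1:]"
  have L_eq: "L = [:0, 1:] * G" and deg_G: "degree G = q ^ n - 1"
    using q_polynomial_div_X[OF assms(3) q] by (simp_all add: G_def)
  have "degree G \<noteq> 0" using assms(4) by (auto simp: G_def irreducible_def is_unit_iff_degree)
  then have "0 < n" using deg_G by (cases n) simp_all
  define \<alpha> where "\<alpha> = v 0"
  have \<alpha>_root: "poly (map_poly f L) \<alpha> = 0" and "\<alpha> \<noteq> 0"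
    using ordered_basis_vector[OF emb assms(6) \<open>0 < n\<close>] by (simp_all add: \<alpha>_def)
  have G_root: "poly (map_poly f G) \<alpha> = 0"
    using \<alpha>_root \<open>\<alpha> \<noteq> 0\<close> by (simp add: L_eq map_poly_emb_mult[OF emb] map_poly_pCons emb_0[OF emb] emb_1[OF emb])
  then have small_roots: "h = 0" if "poly (map_poly f h) \<alpha> = 0" "degree h < q ^ n - 1" for h
    using eq_0_if_common_root_degree_less[OF emb assms(4)[folded G_def] _ that(1)] that(2) deg_G by simp
  have roots: "{x. poly (map_poly f L) x = 0} = scalar_span f n v"
    using assms(6) unfolding ordered_basis_def scalar_span_def by blast
  have orbit: "\<alpha> ^ q ^ j \<in> scalar_span f n v" for j
    using q_polynomial_root_power_card_power[OF emb _ \<alpha>_root] assms(1,3) roots by auto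
  have kernel: "c m = 0"
    if "form_value f n r (\<lambda>j. \<alpha> ^ q ^ j) c = 0" "m \<in> degree_exponents n r" for c m
    using form_value_orbit_eq_0_imp_coeff_eq_0[OF emb small_roots \<open>\<alpha> \<noteq> 0\<close> assms(7) _ that] assms(8) q
    by linarith
  have "inj_on (form_value f n r v) (forms n r)"
    using orbit kernel by (intro inj_on_form_value_if_span[where w = "\<lambda>j. \<alpha> ^ q ^ j", OF emb])
  then show ?thesis by (rule inj_on_eval_mpoly_homogeneous[of f, OF emb_0[OF emb]])
qed

end
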